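(* Let $M$ be a matroid of rank $3$ on $[n]$. If $M$ has no parallel elements, then $M$ is DJS. In particular, every simple matroid of rank $3$ is DJS.
   Context: A rank-$3$ matroid $M$ on $[n]$ is called DJS if, letting $E$ be the set of non-loop elements of $M$, every linear ordering $w_1w_2\cdots w_m$ of $E$ has three consecutive elements $\{w_j,w_{j+1},w_{j+2}\}$ forming a basis of $M$. (Equivalently, the diagonal arrangement $\{U_{ijk}:\{i,j,k\}\text{ a basis}\}$ restricted to the non-loop coordinates meets every chamber of the braid arrangement in a codimension-2 subcomplex.) A matroid is simple if it has no loops and no parallel elements. *)

theory Defs
  imports Main
begin

definition matroid_bases :: "'a set \<Rightarrow> 'a set set \<Rightarrow> bool" where
  "matroid_bases E \<B> \<longleftrightarrow> finite E \<and> \<B> \<noteq> {} \<and> (\<forall>B\<in>\<B>. B \<subseteq> E) \<and>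
     (\<forall>B1\<in>\<B>. \<forall>B2\<in>\<B>. \<forall>x\<in>B1 - B2. \<exists>y\<in>B2 - B1. insert y (B1 - {x}) \<in> \<B>)"

definition matroid_rank_eq :: "'a set set \<Rightarrow> nat \<Rightarrow> bool" where
  "matroid_rank_eq \<B> r \<longleftrightarrow> (\<forall>B\<in>\<B>. card B = r)"

definition indep :: "'a set set \<Rightarrow> 'a set \<Rightarrow> bool" where
  "indep \<B> I \<longleftrightarrow> (\<exists>B\<in>\<B>. I \<subseteq> B)"

definition is_loop :: "'a set \<Rightarrow> 'a set set \<Rightarrow> 'a \<Rightarrow> bool" where
  "is_loop E \<B> e \<longleftrightarrow> e \<in> E \<and> \<not> indep \<B> {e}"

definition parallel :: "'a set \<Rightarrow> 'a set set \<Rightarrow> 'a \<Rightarrow> 'a \<Rightarrow> bool" where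
  "parallel E \<B> e f \<longleftrightarrow> e \<in> E \<and> f \<in> E \<and> e \<noteq> f \<and> \<not> is_loop E \<B> e \<and> \<not> is_loop E \<B> f
      \<and> \<not> indep \<B> {e, f}"

definition nonloops :: "'a set \<Rightarrow> 'a set set \<Rightarrow> 'a set" where
  "nonloops E \<B> = {e \<in> E. \<not> is_loop E \<B> e}"

definition DJS :: "'a set \<Rightarrow> 'a set set \<Rightarrow> bool" where
  "DJS E \<B> \<longleftrightarrow> (\<forall>ws. distinct ws \<and> set ws = nonloops E \<B> \<longrightarrow>
      (\<exists>j. j + 2 < length ws \<and> {ws ! j, ws ! (j + 1), ws ! (j + 2)} \<in> \<B>))"

end

theory Submission
  imports Defs
begin

text \<open>Without parallel elements any two distinct non-loops are independent. For an independent
  pair {a, b}, the elements x with {a, b, x} not a basis form the line through a and b, and two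
  distinct points of that line span the same line. So if no three consecutive entries of an ordering
  form a basis, induction along the ordering puts every entry, hence every basis, on the line
  through its first two entries; but every basis contains an element extending {a, b} to a basis.\<close>

lemma basis_subset_nonloops:
  assumes "matroid_bases E Bs" and "S \<in> Bs"
  shows "S \<subseteq> nonloops E Bs"
  using assms unfolding matroid_bases_def nonloops_def is_loop_def indep_def by blast

lemma indep_pair_if_no_parallel:
  assumes "\<not> (\<exists>e f. parallel E Bs e f)"
    and "a \<in> nonloops E Bs" and "b \<in> nonloops E Bs" and "a \<noteq> b"
  shows "indep Bs {a, b}"
  using assms unfolding parallel_def nonloops_def by blast

lemma indep_extends_by_element_of_basis:
  assumes M: "matroid_bases E Bs" and R: "matroid_rank_eq Bs (Suc (card I))"
    and I: "indep Bs I" and S: "S \<in> Bs"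
  shows "\<exists>y\<in>S. insert y I \<in> Bs"
proof -
  obtain B where B: "B \<in> Bs" "I \<subseteq> B" using I unfolding indep_def by blast
  have card_B: "card B = Suc (card I)" using R B(1) unfolding matroid_rank_eq_def by blast
  then have "finite B" using card.infinite by fastforce
  moreover have "finite I" using B(2) \<open>finite B\<close> finite_subset by blast
  ultimately have "card (B - I) = 1" using card_B B(2) by (simp add: card_Diff_subset)
  then obtain e where e: "B - I = {e}" using card_1_singletonE by blast
  then have B_eq: "B = insert e I" and "e \<notin> I" using B(2) by blast+
  show ?thesis
  proof (cases "e \<in> S")
    case True
    then show ?thesis using B(1) B_eq by blast
  next
    case False
    then obtain y where "y \<in> S - B" "insert y (B - {e}) \<in> Bs"
      using M B(1) S B_eq unfolding matroid_bases_def by blast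
    moreover have "B - {e} = I" using B_eq \<open>e \<notin> I\<close> by blast
    ultimately show ?thesis by auto
  qed
qed

corollary indep_pair_extends_by_element_of_basis:
  assumes "matroid_bases E Bs" and "matroid_rank_eq Bs 3"
    and "a \<noteq> b" and "indep Bs {a, b}" and "S \<in> Bs"
  shows "\<exists>y\<in>S. {a, b, y} \<in> Bs"
proof -
  have "matroid_rank_eq Bs (Suc (card {a, b}))" using assms(2,3) by (simp add: numeral_3_eq_3)
  then have "\<exists>y\<in>S. insert y {a, b} \<in> Bs"
    using indep_extends_by_element_of_basis assms(1,4,5) by blast
  then show ?thesis by (simp add: insert_commute)
qed

text \<open>Restricted to the ground set, this is the closure of {a, b} whenever {a, b} is an
  independent pair of a rank-3 matroid.\<close>
definition line_through :: "'a set set \<Rightarrow> 'a \<Rightarrow> 'a \<Rightarrow> 'a set" where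
  "line_through Bs a b = {x. {a, b, x} \<notin> Bs}"

lemma endpoints_in_line_through:
  assumes "matroid_rank_eq Bs 3"
  shows "a \<in> line_through Bs a b" and "b \<in> line_through Bs a b"
proof -
  have "card {a, b} \<noteq> 3" by (cases "a = b") simp_all
  then have "{a, b} \<notin> Bs" using assms unfolding matroid_rank_eq_def by blast
  then show "a \<in> line_through Bs a b" and "b \<in> line_through Bs a b"
    unfolding line_through_def by (simp_all add: insert_commute)
qed

lemma line_through_subset:
  assumes M: "matroid_bases E Bs" and R: "matroid_rank_eq Bs 3"
    and ab: "a \<noteq> b" "indep Bs {a, b}" and cd: "c \<noteq> d" "indep Bs {c, d}"
    and c: "c \<in> line_through Bs a b" and d: "d \<in> line_through Bs a b"
  shows "line_through Bs c d \<subseteq> line_through Bs a b"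
proof
  fix x
  assume x: "x \<in> line_through Bs c d"
  show "x \<in> line_through Bs a b"
  proof (rule ccontr)
    assume "x \<notin> line_through Bs a b"
    then have "{a, b, x} \<in> Bs" unfolding line_through_def by blast
    then obtain z where "z \<in> {a, b, x}" "{c, d, z} \<in> Bs"
      using indep_pair_extends_by_element_of_basis[OF M R cd] by blast
    with x have z: "z \<in> {a, b}" "{c, d, z} \<in> Bs" unfolding line_through_def by auto
    then obtain w where w: "w \<in> {c, d, z}" "{a, b, w} \<in> Bs"
      using indep_pair_extends_by_element_of_basis[OF M R ab] by blast
    with c d have "w \<in> line_through Bs a b" using z(1) endpoints_in_line_through[OF R] by auto
    with w(2) show False unfolding line_through_def by blast
  qed
qed

lemma no_consecutive_basis_imp_on_line:
  assumes M: "matroid_bases E Bs" and R: "matroid_rank_eq Bs 3" and "distinct ws"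
    and pairs: "\<And>x y. x \<in> set ws \<Longrightarrow> y \<in> set ws \<Longrightarrow> x \<noteq> y \<Longrightarrow> indep Bs {x, y}"
    and no_basis: "\<And>j. j + 2 < length ws \<Longrightarrow> {ws ! j, ws ! (j + 1), ws ! (j + 2)} \<notin> Bs"
  shows "set ws \<subseteq> line_through Bs (ws ! 0) (ws ! 1)"
proof -
  let ?L = "line_through Bs (ws ! 0) (ws ! 1)"
  have independent_neighbours: "ws ! k \<noteq> ws ! (k + 1)" "indep Bs {ws ! k, ws ! (k + 1)}"
    if "k + 1 < length ws" for k
    using that \<open>distinct ws\<close> pairs by (simp_all add: nth_eq_iff_index_eq)
  have on_line: "ws ! k \<in> ?L \<and> ws ! (k + 1) \<in> ?L" if "k + 1 < length ws" for k
    using that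
  proof (induction k)
    case 0
    then show ?case using endpoints_in_line_through[OF R] by simp
  next
    case (Suc k)
    then have IH: "ws ! k \<in> ?L" "ws ! (k + 1) \<in> ?L" by simp_all
    have "ws ! (k + 2) \<in> line_through Bs (ws ! k) (ws ! (k + 1))"
      using no_basis Suc.prems unfolding line_through_def by simp
    also have "\<dots> \<subseteq> ?L"
      using line_through_subset[OF M R _ _ _ _ IH] independent_neighbours Suc.prems by simp
    finally show ?case using IH(2) by simp
  qed
  show ?thesis
  proof
    fix x
    assume "x \<in> set ws"
    then obtain i where "i < length ws" "x = ws ! i" by (auto simp: in_set_conv_nth)
    then show "x \<in> ?L"
      using on_line endpoints_in_line_through[OF R] by (cases i) auto
  qed
qed

theorem proposition6p6:
  fixes n :: nat and \<B> :: "nat set set"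
  assumes "matroid_bases {1..n} \<B>"
    and "matroid_rank_eq \<B> 3"
    and "\<not> (\<exists>e f. parallel {1..n} \<B> e f)"
  shows "DJS {1..n} \<B>"
  unfolding DJS_def
proof (intro allI impI)
  fix ws :: "nat list"
  assume ws: "distinct ws \<and> set ws = nonloops {1..n} \<B>"
  obtain S where S: "S \<in> \<B>" using assms(1) unfolding matroid_bases_def by blast
  have S_ws: "S \<subseteq> set ws" using basis_subset_nonloops[OF assms(1) S] ws by simp
  have "3 \<le> length ws"
    using card_mono[OF finite_set S_ws] S assms(2) ws distinct_card
    unfolding matroid_rank_eq_def by fastforce
  then have "0 < length ws" "1 < length ws" by linarith+
  then have distinct_ab: "ws ! 0 \<noteq> ws ! 1" using ws nth_eq_iff_index_eq[of ws 0 1] by simp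
  have pairs: "\<And>x y. x \<in> set ws \<Longrightarrow> y \<in> set ws \<Longrightarrow> x \<noteq> y \<Longrightarrow> indep \<B> {x, y}"
    using ws indep_pair_if_no_parallel[OF assms(3)] by simp
  have indep_ab: "indep \<B> {ws ! 0, ws ! 1}"
    using pairs distinct_ab \<open>0 < length ws\<close> \<open>1 < length ws\<close> by simp
  show "\<exists>j. j + 2 < length ws \<and> {ws ! j, ws ! (j + 1), ws ! (j + 2)} \<in> \<B>"
  proof (rule ccontr)
    assume "\<not> ?thesis"
    then have "S \<subseteq> line_through \<B> (ws ! 0) (ws ! 1)"
      using no_consecutive_basis_imp_on_line[OF assms(1,2) _ pairs] ws S_ws by blast
    moreover obtain y where "y \<in> S" "{ws ! 0, ws ! 1, y} \<in> \<B>"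
      using indep_pair_extends_by_element_of_basis[OF assms(1,2) distinct_ab indep_ab S] by blast
    ultimately show False unfolding line_through_def by blast
  qed
qed

end
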